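(* Let $c_1,\dots,c_s\in\{\pm1\}^n$ with $c_i=(c_{i,1},\dots,c_{i,n})$, let $\sigma=\sum_{i=1}^s c_i=(\sigma_1,\dots,\sigma_n)$, and for $i\in\{0,\dots,s\}$ let $A_i=\{j\in[n]:\sigma_j=s-2i\}$. Then for every $i\in\{1,\dots,\lfloor s/2\rfloor\}$ and every set $\mathcal{B}\subseteq A_i$ of size $\lfloor s\rfloor_i$, there exists $j\in[s]$ such that $c_{j,b}=1$ for all $b\in\mathcal{B}$. Similarly, for every $i\in\{\lfloor s/2\rfloor+1,\dots,s-1\}$ and every set $\mathcal{D}\subseteq A_i$ of size $\lfloor s\rfloor_{s-i}$, there exists $j\in[s]$ such that $c_{j,d}=-1$ for all $d\in\mathcal{D}$.
   Context: Sums are real sums. For positive integers $s,i$, $\lfloor s\rfloor_i$ denotes the largest integer $q$ such that $iq<s$ (e.g. $\lfloor 6\rfloor_2=2$); $\lfloor s/2\rfloor$ is the usual floor. *)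

theory Defs
  imports Main
begin

text \<open>For positive integers s, i: the largest integer q with i * q < s.\<close>
definition floor_sub :: "nat \<Rightarrow> nat \<Rightarrow> nat" where
  "floor_sub s i = (GREATEST q. i * q < s)"

definition sigma :: "nat \<Rightarrow> (nat \<Rightarrow> nat \<Rightarrow> int) \<Rightarrow> nat \<Rightarrow> int" where
  "sigma s c b = (\<Sum>j=1..s. c j b)"

definition Aset :: "nat \<Rightarrow> nat \<Rightarrow> (nat \<Rightarrow> nat \<Rightarrow> int) \<Rightarrow> nat \<Rightarrow> nat set" where
  "Aset n s c i = {b \<in> {1..n}. sigma s c b = int s - 2 * int i}"

end

theory Submission
  imports Defs
begin

text \<open>A coordinate b of A_i has exactly i vectors with entry -1 there, so a vector with entry 1 on
  all of a set B \<subseteq> A_i is missed by at most i * card B of the s vectors; when i * card B < s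
  some vector survives. Taking card B = \<lfloor>s\<rfloor>_i makes this strict inequality hold, and the
  case of entries -1 is symmetric with s - i in place of i.\<close>

lemma sigma_eq_card_neg:
  fixes c :: "nat \<Rightarrow> nat \<Rightarrow> int"
  assumes pm: "\<And>j. j \<in> {1..s} \<Longrightarrow> c j b = 1 \<or> c j b = -1"
  shows "sigma s c b = int s - 2 * int (card {j \<in> {1..s}. c j b = -1})"
proof -
  have "sigma s c b = (\<Sum>j=1..s. 1 - 2 * (if c j b = -1 then 1 else 0))"
    unfolding sigma_def by (rule sum.cong) (use pm in auto)
  also have "\<dots> = int s - 2 * (\<Sum>j=1..s. if c j b = -1 then 1 else 0)"
    by (simp add: sum_subtractf sum_distrib_left)
  also have "(\<Sum>j=1..s. if c j b = -1 then 1 else 0) = int (card {j \<in> {1..s}. c j b = -1})"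
    by (simp add: sum.If_cases Int_def)
  finally show ?thesis .
qed

lemma card_sign_mismatch_of_mem_Aset:
  fixes c :: "nat \<Rightarrow> nat \<Rightarrow> int"
  assumes pm: "\<And>j b. j \<in> {1..s} \<Longrightarrow> b \<in> {1..n} \<Longrightarrow> c j b = 1 \<or> c j b = -1"
    and b: "b \<in> Aset n s c i"
  shows "card {j \<in> {1..s}. c j b \<noteq> 1} = i"
    and "card {j \<in> {1..s}. c j b \<noteq> -1} = s - i"
proof -
  have pm_b: "c j b = 1 \<or> c j b = -1" if "j \<in> {1..s}" for j
    using pm[OF that] b unfolding Aset_def by blast
  have neg: "card {j \<in> {1..s}. c j b = -1} = i"
    using b sigma_eq_card_neg[of s c b, OF pm_b] unfolding Aset_def by auto
  have "{j \<in> {1..s}. c j b \<noteq> 1} = {j \<in> {1..s}. c j b = -1}"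
    using pm_b by force
  then show "card {j \<in> {1..s}. c j b \<noteq> 1} = i"
    using neg by simp
  have "{j \<in> {1..s}. c j b \<noteq> -1} = {1..s} - {j \<in> {1..s}. c j b = -1}"
    by auto
  also have "card \<dots> = card {1..s} - card {j \<in> {1..s}. c j b = -1}"
    by (rule card_Diff_subset) auto
  finally show "card {j \<in> {1..s}. c j b \<noteq> -1} = s - i"
    using neg by simp
qed

lemma exists_common_value:
  fixes c :: "nat \<Rightarrow> 'b \<Rightarrow> 'a"
  assumes fin: "finite D"
    and few: "\<And>b. b \<in> D \<Longrightarrow> card {j \<in> {1..s}. c j b \<noteq> v} \<le> k"
    and lt: "k * card D < s"
  shows "\<exists>j \<in> {1..s}. \<forall>b \<in> D. c j b = v"
proof (rule ccontr)
  assume "\<not> ?thesis"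
  then have "{1..s} \<subseteq> (\<Union>b \<in> D. {j \<in> {1..s}. c j b \<noteq> v})"
    by blast
  then have "card {1..s} \<le> card (\<Union>b \<in> D. {j \<in> {1..s}. c j b \<noteq> v})"
    by (intro card_mono) (use fin in auto)
  also have "\<dots> \<le> (\<Sum>b \<in> D. card {j \<in> {1..s}. c j b \<noteq> v})"
    by (rule card_UN_le[OF fin])
  also have "\<dots> \<le> k * card D"
    using sum_bounded_above[of D _ k] few by (simp add: mult.commute)
  finally show False
    using lt by simp
qed

lemma floor_sub_mult_less:
  assumes "0 < i" "0 < s"
  shows "i * floor_sub s i < s"
  unfolding floor_sub_def
proof (rule GreatestI_nat[where k = 0])
  show "i * 0 < s"
    using assms by simp
  fix q assume "i * q < s"
  moreover have "q \<le> i * q"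
    using assms(1) by simp
  ultimately show "q \<le> s"
    by linarith
qed

lemma finite_Aset: "finite (Aset n s c i)"
  unfolding Aset_def by simp

theorem lemma2:
  fixes n s :: nat and c :: "nat \<Rightarrow> nat \<Rightarrow> int"
  assumes pm: "\<And>j b. j \<in> {1..s} \<Longrightarrow> b \<in> {1..n} \<Longrightarrow> c j b = 1 \<or> c j b = -1"
  shows "(\<forall>i \<in> {1..s div 2}. \<forall>B. B \<subseteq> Aset n s c i \<and> card B = floor_sub s i \<longrightarrow>
            (\<exists>j \<in> {1..s}. \<forall>b \<in> B. c j b = 1))
       \<and> (\<forall>i \<in> {s div 2 + 1..s - 1}. \<forall>D. D \<subseteq> Aset n s c i \<and> card D = floor_sub s (s - i) \<longrightarrow>
            (\<exists>j \<in> {1..s}. \<forall>d \<in> D. c j d = -1))"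
proof (intro conjI ballI allI impI)
  fix i B
  assume "i \<in> {1..s div 2}" and "B \<subseteq> Aset n s c i \<and> card B = floor_sub s i"
  then show "\<exists>j \<in> {1..s}. \<forall>b \<in> B. c j b = 1"
    using card_sign_mismatch_of_mem_Aset(1)[where s = s and n = n and c = c, OF pm]
      floor_sub_mult_less[of i s]
    by (intro exists_common_value[where k = i]) (auto intro: finite_subset[OF _ finite_Aset])
next
  fix i D
  assume "i \<in> {s div 2 + 1..s - 1}" and "D \<subseteq> Aset n s c i \<and> card D = floor_sub s (s - i)"
  then show "\<exists>j \<in> {1..s}. \<forall>d \<in> D. c j d = -1"
    using card_sign_mismatch_of_mem_Aset(2)[where s = s and n = n and c = c, OF pm]
      floor_sub_mult_less[of "s - i" s]
    by (intro exists_common_value[where k = "s - i"]) (auto intro: finite_subset[OF _ finite_Aset])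
qed

end
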